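(* For every tournament $T$, $\Delta(T)\le |F|$, where $F$ is a minimum feedback arc set of $T$.
   Context: A tournament is a digraph with exactly one arc between each pair of distinct vertices. A feedback arc set is a set of arcs whose removal makes the digraph acyclic. For an ordering $\sigma$ of $V(T)$, an arc $(x,y)$ is backward if $y$ precedes $x$; $d_\sigma(v)$ is the number of backward arcs incident to $v$, $\Delta_\sigma(T)=\max_v d_\sigma(v)$, and the degreewidth is $\Delta(T)=\min_\sigma\Delta_\sigma(T)$. *)

theory Defs
  imports Main
begin

definition tournament :: "'a set \<Rightarrow> ('a \<times> 'a) set \<Rightarrow> bool" where
  "tournament V A \<longleftrightarrow> finite V \<and> A \<subseteq> V \<times> V \<and>
     (\<forall>x\<in>V. (x, x) \<notin> A) \<and>
     (\<forall>x\<in>V. \<forall>y\<in>V. x \<noteq> y \<longrightarrow> ((x, y) \<in> A \<longleftrightarrow> (y, x) \<notin> A))"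

definition feedback_arc_set :: "('a \<times> 'a) set \<Rightarrow> ('a \<times> 'a) set \<Rightarrow> bool" where
  "feedback_arc_set A F \<longleftrightarrow> F \<subseteq> A \<and> acyclic (A - F)"

definition min_feedback_arc_set :: "('a \<times> 'a) set \<Rightarrow> ('a \<times> 'a) set \<Rightarrow> bool" where
  "min_feedback_arc_set A F \<longleftrightarrow> feedback_arc_set A F \<and>
     (\<forall>F'. feedback_arc_set A F' \<longrightarrow> card F \<le> card F')"

definition ordering :: "'a set \<Rightarrow> 'a list \<Rightarrow> bool" where
  "ordering V \<sigma> \<longleftrightarrow> distinct \<sigma> \<and> set \<sigma> = V"

definition backward_arcs :: "('a \<times> 'a) set \<Rightarrow> 'a list \<Rightarrow> ('a \<times> 'a) set" where
  "backward_arcs A \<sigma> = {(x, y) \<in> A. \<exists>i j. i < j \<and> j < length \<sigma> \<and>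
                                   \<sigma> ! i = y \<and> \<sigma> ! j = x}"

definition back_deg :: "('a \<times> 'a) set \<Rightarrow> 'a list \<Rightarrow> 'a \<Rightarrow> nat" where
  "back_deg A \<sigma> v = card {e \<in> backward_arcs A \<sigma>. fst e = v \<or> snd e = v}"

definition max_back_deg :: "'a set \<Rightarrow> ('a \<times> 'a) set \<Rightarrow> 'a list \<Rightarrow> nat" where
  "max_back_deg V A \<sigma> = Max (insert 0 (back_deg A \<sigma> ` V))"

definition degreewidth :: "'a set \<Rightarrow> ('a \<times> 'a) set \<Rightarrow> nat" where
  "degreewidth V A = Min {max_back_deg V A \<sigma> | \<sigma>. ordering V \<sigma>}"

end

theory Submission
  imports Defs
begin

text \<open>Topologically sort the acyclic digraph \<open>A - F\<close>: in the resulting ordering every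
  backward arc of \<open>A\<close> lies in \<open>F\<close>, so no vertex is incident to more than \<open>|F|\<close> backward arcs.\<close>

lemma backward_arcs_empty_iff:
  "backward_arcs R \<sigma> = {} \<longleftrightarrow> sorted_wrt (\<lambda>x y. (y, x) \<notin> R) \<sigma>"
  by (auto simp: backward_arcs_def sorted_wrt_iff_nth_less)

lemma backward_arcs_subset_Diff:
  "backward_arcs A \<sigma> \<subseteq> backward_arcs (A - F) \<sigma> \<union> F"
  by (auto simp: backward_arcs_def)

lemma finite_acyclic_obtains_sink:
  assumes "finite S" "S \<noteq> {}" "acyclic R"
  obtains x where "x \<in> S" "\<And>y. y \<in> S \<Longrightarrow> (x, y) \<notin> R"
proof -
  have "acyclic (R \<inter> S \<times> S)"
    using assms(3) by (rule acyclic_subset) blast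
  then have "wf ((R \<inter> S \<times> S)\<inverse>)"
    using assms(1) by (intro finite_acyclic_wf_converse) auto
  then obtain x where "x \<in> S" "\<And>y. (y, x) \<in> (R \<inter> S \<times> S)\<inverse> \<Longrightarrow> y \<notin> S"
    using assms(2) wfE_min by (metis ex_in_conv)
  then show thesis
    using that by blast
qed

lemma acyclic_obtains_ordering_without_backward_arcs:
  assumes "finite S" "acyclic R"
  obtains \<sigma> where "ordering S \<sigma>" "backward_arcs R \<sigma> = {}"
proof -
  have "\<exists>\<sigma>. ordering S \<sigma> \<and> sorted_wrt (\<lambda>x y. (y, x) \<notin> R) \<sigma>"
    using assms(1)
  proof (induction S rule: finite_remove_induct)
    case empty
    show ?case by (auto simp: ordering_def)
  next
    case (remove S)
    obtain x where x: "x \<in> S" "\<And>y. y \<in> S \<Longrightarrow> (x, y) \<notin> R"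
      using finite_acyclic_obtains_sink[OF remove.hyps(1,2) assms(2)] by blast
    obtain \<sigma> where "ordering (S - {x}) \<sigma>" "sorted_wrt (\<lambda>x y. (y, x) \<notin> R) \<sigma>"
      using remove.IH[OF x(1)] by blast
    then have "ordering S (\<sigma> @ [x]) \<and> sorted_wrt (\<lambda>x y. (y, x) \<notin> R) (\<sigma> @ [x])"
      using x by (auto simp: ordering_def sorted_wrt_append)
    then show ?case ..
  qed
  with that show thesis by (auto simp: backward_arcs_empty_iff)
qed

lemma max_back_deg_le_card:
  assumes "finite V" "finite B" "backward_arcs A \<sigma> \<subseteq> B"
  shows "max_back_deg V A \<sigma> \<le> card B"
proof -
  have "back_deg A \<sigma> v \<le> card B" for v
    unfolding back_deg_def using assms(2,3) by (intro card_mono) auto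
  then show ?thesis
    using assms(1) by (simp add: max_back_deg_def)
qed

lemma degreewidth_le_max_back_deg:
  assumes "finite V" "ordering V \<sigma>"
  shows "degreewidth V A \<le> max_back_deg V A \<sigma>"
proof -
  have "finite {\<sigma>. ordering V \<sigma>}"
    using finite_subset_distinct[OF assms(1)] by (rule finite_subset[rotated]) (auto simp: ordering_def)
  then have "finite {max_back_deg V A \<sigma> | \<sigma>. ordering V \<sigma>}"
    by (simp add: setcompr_eq_image)
  then show ?thesis
    unfolding degreewidth_def using assms(2) by (intro Min_le) auto
qed

theorem mainTheorem19:
  fixes V :: "'a set" and A F :: "('a \<times> 'a) set"
  assumes "tournament V A" and "min_feedback_arc_set A F"
  shows "degreewidth V A \<le> card F"
proof -
  have "finite V" and "A \<subseteq> V \<times> V"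
    using assms(1) by (auto simp: tournament_def)
  have "F \<subseteq> A" and "acyclic (A - F)"
    using assms(2) by (auto simp: min_feedback_arc_set_def feedback_arc_set_def)
  have "finite F"
    using \<open>finite V\<close> \<open>A \<subseteq> V \<times> V\<close> \<open>F \<subseteq> A\<close> by (meson finite_SigmaI finite_subset)
  obtain \<sigma> where "ordering V \<sigma>" "backward_arcs (A - F) \<sigma> = {}"
    using acyclic_obtains_ordering_without_backward_arcs[OF \<open>finite V\<close> \<open>acyclic (A - F)\<close>] .
  then have "backward_arcs A \<sigma> \<subseteq> F"
    using backward_arcs_subset_Diff[of A \<sigma> F] by simp
  have "degreewidth V A \<le> max_back_deg V A \<sigma>"
    using \<open>finite V\<close> \<open>ordering V \<sigma>\<close> by (rule degreewidth_le_max_back_deg)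
  also have "\<dots> \<le> card F"
    using \<open>finite V\<close> \<open>finite F\<close> \<open>backward_arcs A \<sigma> \<subseteq> F\<close> by (rule max_back_deg_le_card)
  finally show ?thesis .
qed

end
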